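(* Let $A$ be a metabelian Lie $U$-algebra over a field $k$, with $R=k[x_\alpha:\alpha\in\Lambda]$ as below, and let $M$ be a torsion-free $R$-module. Then every Lie algebra homomorphism $\varphi:A\oplus M\to A$ that is the identity on $A$ maps $M$ into $\mathrm{Fit}(A)$, its restriction $\varphi|_M$ is an $R$-module homomorphism $M\to\mathrm{Fit}(A)$, and $\varphi\mapsto\varphi|_M$ is a bijection between the set $\mathrm{Hom}_A(A\oplus M,A)$ of such homomorphisms and $\mathrm{Hom}_R(M,\mathrm{Fit}(A))$.
   Context: A Lie algebra is metabelian if $(a\circ b)\circ(c\circ d)=0$ identically; $\mathrm{Fit}(A)$ is the ideal generated by all elements lying in nilpotent ideals. A metabelian Lie algebra $A$ is a $U$-algebra if $\mathrm{Fit}(A)$ is abelian and torsion-free as a module over $R=k[x_\alpha:\alpha\in\Lambda]$, where $\{z_\alpha:\alpha\in\Lambda\}\subseteq A$ is a family whose images form a basis of $A/\mathrm{Fit}(A)$ and $b\cdot x_\alpha=b\circ z_\alpha$ for $b\in\mathrm{Fit}(A)$ (extended multiplicatively and linearly). Let $V$ be the $k$-span of $\{z_\alpha\}$. Direct module extension: $A\oplus M$ is the $k$-space $V\oplus\mathrm{Fit}(A)\oplus M$ with bracket: on $V\oplus\mathrm{Fit}(A)$ it is that of $A$; all products between elements of $\mathrm{Fit}(A)\oplus M$ and elements of $M$ (either order) are $0$; $m\circ z_\alpha=m\cdot x_\alpha=-z_\alpha\circ m$ for $m\in M$; extended bilinearly. It is a metabelian Lie algebra containing $A$. *)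

theory Defs
  imports Complex_Main "HOL-Library.Poly_Mapping" "HOL-Library.Product_Plus"
begin

definition lie_algebra ::
  "('k::field \<Rightarrow> 'a::ab_group_add \<Rightarrow> 'a) \<Rightarrow> ('a \<Rightarrow> 'a \<Rightarrow> 'a) \<Rightarrow> bool" where
  "lie_algebra sc br \<longleftrightarrow> module sc
     \<and> (\<forall>a b c. br (a + b) c = br a c + br b c)
     \<and> (\<forall>a b c. br a (b + c) = br a b + br a c)
     \<and> (\<forall>r a b. br (sc r a) b = sc r (br a b))
     \<and> (\<forall>r a b. br a (sc r b) = sc r (br a b))
     \<and> (\<forall>a. br a a = 0)
     \<and> (\<forall>a b c. br a (br b c) + br b (br c a) + br c (br a b) = 0)"

definition metabelian :: "('a::ab_group_add \<Rightarrow> 'a \<Rightarrow> 'a) \<Rightarrow> bool" where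
  "metabelian br \<longleftrightarrow> (\<forall>a b c d. br (br a b) (br c d) = 0)"

definition lie_ideal ::
  "('k::field \<Rightarrow> 'a::ab_group_add \<Rightarrow> 'a) \<Rightarrow> ('a \<Rightarrow> 'a \<Rightarrow> 'a) \<Rightarrow> 'a set \<Rightarrow> bool" where
  "lie_ideal sc br I \<longleftrightarrow> module.subspace sc I \<and> (\<forall>x\<in>I. \<forall>a. br x a \<in> I)"

fun lower_central ::
  "('k::field \<Rightarrow> 'a::ab_group_add \<Rightarrow> 'a) \<Rightarrow> ('a \<Rightarrow> 'a \<Rightarrow> 'a) \<Rightarrow> 'a set \<Rightarrow> nat \<Rightarrow> 'a set" where
  "lower_central sc br I 0 = I"
| "lower_central sc br I (Suc n) =
     module.span sc {br x y | x y. x \<in> lower_central sc br I n \<and> y \<in> I}"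

definition nilpotent_ideal ::
  "('k::field \<Rightarrow> 'a::ab_group_add \<Rightarrow> 'a) \<Rightarrow> ('a \<Rightarrow> 'a \<Rightarrow> 'a) \<Rightarrow> 'a set \<Rightarrow> bool" where
  "nilpotent_ideal sc br I \<longleftrightarrow> lie_ideal sc br I \<and> (\<exists>n. lower_central sc br I n \<subseteq> {0})"

definition Fit ::
  "('k::field \<Rightarrow> 'a::ab_group_add \<Rightarrow> 'a) \<Rightarrow> ('a \<Rightarrow> 'a \<Rightarrow> 'a) \<Rightarrow> 'a set" where
  "Fit sc br = \<Inter>{J. lie_ideal sc br J \<and>
      \<Union>{I. nilpotent_ideal sc br I} \<subseteq> J}"

definition quot_basis ::
  "('k::field \<Rightarrow> 'a::ab_group_add \<Rightarrow> 'a) \<Rightarrow> 'a set \<Rightarrow> ('l \<Rightarrow> 'a) \<Rightarrow> bool" where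
  "quot_basis sc F z \<longleftrightarrow>
     (\<forall>a. \<exists>c f. finite {\<alpha>. c \<alpha> \<noteq> 0} \<and> f \<in> F \<and>
               a = (\<Sum>\<alpha>\<in>{\<alpha>. c \<alpha> \<noteq> 0}. sc (c \<alpha>) (z \<alpha>)) + f)
   \<and> (\<forall>c. finite {\<alpha>. c \<alpha> \<noteq> 0} \<and> (\<Sum>\<alpha>\<in>{\<alpha>. c \<alpha> \<noteq> 0}. sc (c \<alpha>) (z \<alpha>)) \<in> F
          \<longrightarrow> (\<forall>\<alpha>. c \<alpha> = 0))"

type_synonym ('l, 'k) mpoly = "('l \<Rightarrow>\<^sub>0 nat) \<Rightarrow>\<^sub>0 'k"

definition const_poly :: "'k::zero \<Rightarrow> ('l, 'k) mpoly" where
  "const_poly c = Poly_Mapping.single 0 c"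

definition var_poly :: "'l \<Rightarrow> ('l, 'k::{zero,one}) mpoly" where
  "var_poly \<alpha> = Poly_Mapping.single (Poly_Mapping.single \<alpha> 1) 1"

text \<open>Defined pointwise as the common value of
  all orderings, which is well-defined wherever the operators commute (e.g. on Fit(A)).\<close>
definition mono_act :: "('l \<Rightarrow> 'b \<Rightarrow> 'b) \<Rightarrow> ('l \<Rightarrow>\<^sub>0 nat) \<Rightarrow> 'b \<Rightarrow> 'b" where
  "mono_act T \<mu> b = (THE y. \<forall>xs. (\<forall>\<alpha>. count_list xs \<alpha> = Poly_Mapping.lookup \<mu> \<alpha>)
                              \<longrightarrow> fold T xs b = y)"

definition poly_act ::
  "('k \<Rightarrow> 'b::comm_monoid_add \<Rightarrow> 'b) \<Rightarrow> ('l \<Rightarrow> 'b \<Rightarrow> 'b) \<Rightarrow> ('l, 'k::zero) mpoly \<Rightarrow> 'b \<Rightarrow> 'b" where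
  "poly_act sc T p b = (\<Sum>\<mu>\<in>Poly_Mapping.keys p. sc (Poly_Mapping.lookup p \<mu>) (mono_act T \<mu> b))"

definition fit_act ::
  "('k::field \<Rightarrow> 'a::ab_group_add \<Rightarrow> 'a) \<Rightarrow> ('a \<Rightarrow> 'a \<Rightarrow> 'a) \<Rightarrow> ('l \<Rightarrow> 'a)
    \<Rightarrow> ('l, 'k) mpoly \<Rightarrow> 'a \<Rightarrow> 'a" where
  "fit_act sc br z = poly_act sc (\<lambda>\<alpha> b. br b (z \<alpha>))"

definition U_algebra ::
  "('k::field \<Rightarrow> 'a::ab_group_add \<Rightarrow> 'a) \<Rightarrow> ('a \<Rightarrow> 'a \<Rightarrow> 'a) \<Rightarrow> ('l \<Rightarrow> 'a) \<Rightarrow> bool" where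
  "U_algebra sc br z \<longleftrightarrow> lie_algebra sc br \<and> metabelian br
     \<and> quot_basis sc (Fit sc br) z
     \<and> (\<forall>x\<in>Fit sc br. \<forall>y\<in>Fit sc br. br x y = 0)
     \<and> (\<forall>p b. b \<in> Fit sc br \<and> fit_act sc br z p b = 0 \<longrightarrow> p = 0 \<or> b = 0)"

definition torsion_free :: "(('l, 'k::field) mpoly \<Rightarrow> 'm::ab_group_add \<Rightarrow> 'm) \<Rightarrow> bool" where
  "torsion_free act \<longleftrightarrow> (\<forall>p m. act p m = 0 \<longrightarrow> p = 0 \<or> m = 0)"

definition zcoords ::
  "('k::field \<Rightarrow> 'a::ab_group_add \<Rightarrow> 'a) \<Rightarrow> ('a \<Rightarrow> 'a \<Rightarrow> 'a) \<Rightarrow> ('l \<Rightarrow> 'a) \<Rightarrow> 'a \<Rightarrow> 'l \<Rightarrow> 'k" where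
  "zcoords sc br z a = (THE c. finite {\<alpha>. c \<alpha> \<noteq> 0} \<and>
      a - (\<Sum>\<alpha>\<in>{\<alpha>. c \<alpha> \<noteq> 0}. sc (c \<alpha>) (z \<alpha>)) \<in> Fit sc br)"

text \<open>m \<circ> a for m in M, a in A: by bilinearity m \<circ> (sum c_alpha z_alpha + f)
  = m \<cdot> (sum c_alpha x_alpha).\<close>
definition mod_br ::
  "('k::field \<Rightarrow> 'a::ab_group_add \<Rightarrow> 'a) \<Rightarrow> ('a \<Rightarrow> 'a \<Rightarrow> 'a) \<Rightarrow> ('l \<Rightarrow> 'a)
    \<Rightarrow> (('l, 'k) mpoly \<Rightarrow> 'm \<Rightarrow> 'm) \<Rightarrow> 'm \<Rightarrow> 'a \<Rightarrow> 'm" where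
  "mod_br sc br z act m a =
     act (\<Sum>\<alpha>\<in>{\<alpha>. zcoords sc br z a \<alpha> \<noteq> 0}.
            Poly_Mapping.single (Poly_Mapping.single \<alpha> 1) (zcoords sc br z a \<alpha>)) m"

definition ext_br ::
  "('k::field \<Rightarrow> 'a::ab_group_add \<Rightarrow> 'a) \<Rightarrow> ('a \<Rightarrow> 'a \<Rightarrow> 'a) \<Rightarrow> ('l \<Rightarrow> 'a)
    \<Rightarrow> (('l, 'k) mpoly \<Rightarrow> 'm::ab_group_add \<Rightarrow> 'm) \<Rightarrow> 'a \<times> 'm \<Rightarrow> 'a \<times> 'm \<Rightarrow> 'a \<times> 'm" where
  "ext_br sc br z act x y =
     (br (fst x) (fst y),
      mod_br sc br z act (snd x) (fst y) - mod_br sc br z act (snd y) (fst x))"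

definition ext_sc ::
  "('k::field \<Rightarrow> 'a::ab_group_add \<Rightarrow> 'a) \<Rightarrow> (('l, 'k) mpoly \<Rightarrow> 'm::ab_group_add \<Rightarrow> 'm)
    \<Rightarrow> 'k \<Rightarrow> 'a \<times> 'm \<Rightarrow> 'a \<times> 'm" where
  "ext_sc sc act r x = (sc r (fst x), act (const_poly r) (snd x))"

definition Hom_A ::
  "('k::field \<Rightarrow> 'a::ab_group_add \<Rightarrow> 'a) \<Rightarrow> ('a \<Rightarrow> 'a \<Rightarrow> 'a) \<Rightarrow> ('l \<Rightarrow> 'a)
    \<Rightarrow> (('l, 'k) mpoly \<Rightarrow> 'm::ab_group_add \<Rightarrow> 'm) \<Rightarrow> ('a \<times> 'm \<Rightarrow> 'a) set" where
  "Hom_A sc br z act = {\<phi>.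
      (\<forall>x y. \<phi> (x + y) = \<phi> x + \<phi> y)
    \<and> (\<forall>r x. \<phi> (ext_sc sc act r x) = sc r (\<phi> x))
    \<and> (\<forall>x y. \<phi> (ext_br sc br z act x y) = br (\<phi> x) (\<phi> y))
    \<and> (\<forall>a. \<phi> (a, 0) = a)}"

definition Hom_R ::
  "('k::field \<Rightarrow> 'a::ab_group_add \<Rightarrow> 'a) \<Rightarrow> ('a \<Rightarrow> 'a \<Rightarrow> 'a) \<Rightarrow> ('l \<Rightarrow> 'a)
    \<Rightarrow> (('l, 'k) mpoly \<Rightarrow> 'm::ab_group_add \<Rightarrow> 'm) \<Rightarrow> ('m \<Rightarrow> 'a) set" where
  "Hom_R sc br z act = {\<psi>.
      (\<forall>m. \<psi> m \<in> Fit sc br)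
    \<and> (\<forall>m n. \<psi> (m + n) = \<psi> m + \<psi> n)
    \<and> (\<forall>p m. \<psi> (act p m) = fit_act sc br z p (\<psi> m))}"

end

theory Submission
  imports Defs "HOL-Library.Multiset"
begin

text \<open>For \<open>\<phi> \<in> Hom\<^sub>A(A \<oplus> M, A)\<close> put \<open>\<psi> = \<phi>(0, -)\<close>; then \<open>\<phi>(a, m) = a + \<psi> m\<close>, so \<open>\<phi>\<close>
  is determined by \<open>\<psi>\<close>. Bracketing \<open>(0, m)\<close> with \<open>(z\<^sub>\<alpha>, 0)\<close> gives
  \<open>\<psi>(m \<cdot> x\<^sub>\<alpha>) = \<psi> m \<circ> z\<^sub>\<alpha>\<close>, so \<open>\<psi>\<close> is \<open>R\<close>-linear, and bracketing with \<open>(b, 0)\<close>,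
  \<open>b \<in> Fit(A)\<close>, shows that \<open>\<psi> m\<close> centralises \<open>Fit(A)\<close>. But \<open>Fit(A)\<close> is its own
  centraliser: the coordinates of \<open>u \<notin> Fit(A)\<close> modulo \<open>Fit(A)\<close> form a nonzero linear
  polynomial \<open>p\<close> with \<open>b \<cdot> p = b \<circ> u\<close>, so if \<open>u\<close> centralised \<open>Fit(A)\<close>, torsion-freeness
  of \<open>Fit(A)\<close> would give \<open>Fit(A) = 0\<close>; yet the derived algebra of a metabelian algebra
  is an abelian, hence nilpotent, ideal, so \<open>A\<close> would be abelian and \<open>Fit(A) = A\<close>.
  Conversely every \<open>\<psi> \<in> Hom\<^sub>R(M, Fit(A))\<close> extends to \<open>(a, m) \<mapsto> a + \<psi> m\<close>, which
  respects brackets because \<open>Fit(A)\<close> is abelian and \<open>m \<circ> a\<close> depends only on \<open>a\<close> modulo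
  \<open>Fit(A)\<close>.\<close>

lemma single_eq_single_same_value_iff [simp]:
  "Poly_Mapping.single \<alpha> v = Poly_Mapping.single \<beta> v \<longleftrightarrow> \<alpha> = \<beta> \<or> v = 0"
  by (metis lookup_single_eq lookup_single_not_eq single_zero)

definition monomial_of_list :: "'l list \<Rightarrow> 'l \<Rightarrow>\<^sub>0 nat" where
  "monomial_of_list xs = sum_list (map (\<lambda>\<alpha>. Poly_Mapping.single \<alpha> 1) xs)"

lemma lookup_monomial_of_list:
  "Poly_Mapping.lookup (monomial_of_list xs) \<alpha> = count_list xs \<alpha>"
  by (induct xs) (auto simp: monomial_of_list_def lookup_add lookup_single when_def)

lemma monomial_of_list_Cons:
  "monomial_of_list (\<alpha> # xs) = Poly_Mapping.single \<alpha> 1 + monomial_of_list xs"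
  by (simp add: monomial_of_list_def)

lemma mset_eq_iff_count_list: "mset xs = M \<longleftrightarrow> (\<forall>\<alpha>. count_list xs \<alpha> = count M \<alpha>)"
  by (simp add: multiset_eq_iff count_mset)

lemma ex_list_count_list_eq_lookup: "\<exists>xs. \<forall>\<alpha>. count_list xs \<alpha> = Poly_Mapping.lookup \<mu> \<alpha>"
proof -
  obtain xs where "mset xs = Abs_multiset (Poly_Mapping.lookup \<mu>)" using ex_mset by blast
  then have "\<forall>\<alpha>. count_list xs \<alpha> = Poly_Mapping.lookup \<mu> \<alpha>"
    by (simp add: mset_eq_iff_count_list)
  then show ?thesis by blast
qed

lemma mono_act_eqI:
  assumes "\<And>xs. \<forall>\<alpha>. count_list xs \<alpha> = Poly_Mapping.lookup \<mu> \<alpha> \<Longrightarrow> fold T xs b = y"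
  shows "mono_act T \<mu> b = y"
proof -
  obtain xs where "\<forall>\<alpha>. count_list xs \<alpha> = Poly_Mapping.lookup \<mu> \<alpha>"
    using ex_list_count_list_eq_lookup by blast
  then show ?thesis
    unfolding mono_act_def by (intro the_equality) (use assms in blast)+
qed

lemma mono_act_zero:
  fixes T :: "'l \<Rightarrow> 'b \<Rightarrow> 'b"
  shows "mono_act T 0 b = b"
proof (rule mono_act_eqI)
  fix xs :: "'l list" assume "\<forall>\<alpha>. count_list xs \<alpha> = Poly_Mapping.lookup 0 \<alpha>"
  then have "mset xs = {#}" by (simp add: mset_eq_iff_count_list)
  then show "fold T xs b = b" by simp
qed

lemma mono_act_single:
  fixes T :: "'l \<Rightarrow> 'b \<Rightarrow> 'b"
  shows "mono_act T (Poly_Mapping.single \<alpha> 1) b = T \<alpha> b"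
proof (rule mono_act_eqI)
  fix xs assume "\<forall>\<beta>. count_list xs \<beta> = Poly_Mapping.lookup (Poly_Mapping.single \<alpha> 1) \<beta>"
  then have "mset xs = {#\<alpha>#}" by (simp add: mset_eq_iff_count_list lookup_single when_def)
  then show "fold T xs b = T \<alpha> b" by simp
qed

lemma poly_mapping_sum_single_lookup:
  "(\<Sum>\<mu>\<in>Poly_Mapping.keys p. Poly_Mapping.single \<mu> (Poly_Mapping.lookup p \<mu>)) = p"
proof (rule poly_mapping_eqI)
  fix \<nu>
  have "Poly_Mapping.lookup (\<Sum>\<mu>\<in>Poly_Mapping.keys p. Poly_Mapping.single \<mu> (Poly_Mapping.lookup p \<mu>)) \<nu>
      = (\<Sum>\<mu>\<in>Poly_Mapping.keys p. if \<mu> = \<nu> then Poly_Mapping.lookup p \<mu> else 0)"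
    unfolding lookup_sum lookup_single by (rule sum.cong) (auto simp: when_def)
  also have "\<dots> = Poly_Mapping.lookup p \<nu>" by (auto simp: in_keys_iff)
  finally show "Poly_Mapping.lookup (\<Sum>\<mu>\<in>Poly_Mapping.keys p. Poly_Mapping.single \<mu> (Poly_Mapping.lookup p \<mu>)) \<nu>
      = Poly_Mapping.lookup p \<nu>" .
qed

definition linear_poly :: "'l set \<Rightarrow> ('l \<Rightarrow> 'k) \<Rightarrow> ('l, 'k::comm_monoid_add) mpoly" where
  "linear_poly S c = (\<Sum>\<alpha>\<in>S. Poly_Mapping.single (Poly_Mapping.single \<alpha> 1) (c \<alpha>))"

lemma lookup_linear_poly:
  assumes "finite S" "\<alpha> \<in> S"
  shows "Poly_Mapping.lookup (linear_poly S c) (Poly_Mapping.single \<alpha> 1) = c \<alpha>"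
proof -
  have "Poly_Mapping.lookup (linear_poly S c) (Poly_Mapping.single \<alpha> 1)
      = (\<Sum>\<beta>\<in>S. if \<beta> = \<alpha> then c \<beta> else 0)"
    unfolding linear_poly_def lookup_sum lookup_single by (rule sum.cong) (auto simp: when_def)
  also have "\<dots> = c \<alpha>" using assms by simp
  finally show ?thesis .
qed

lemma keys_linear_poly_subset:
  "Poly_Mapping.keys (linear_poly S c) \<subseteq> (\<lambda>\<alpha>. Poly_Mapping.single \<alpha> 1) ` S"
proof -
  have "Poly_Mapping.keys (linear_poly S c)
      \<subseteq> (\<Union>\<alpha>\<in>S. Poly_Mapping.keys (Poly_Mapping.single (Poly_Mapping.single \<alpha> 1) (c \<alpha>)))"
    unfolding linear_poly_def by (rule keys_sum)
  then show ?thesis by auto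
qed

lemma linear_poly_nonzero:
  assumes "finite S" "\<alpha> \<in> S" "c \<alpha> \<noteq> 0"
  shows "linear_poly S c \<noteq> 0"
  using lookup_linear_poly[OF assms(1,2)] assms(3) by (metis lookup_zero)

abbreviation lin_comb ::
  "('k::zero \<Rightarrow> 'a \<Rightarrow> 'a) \<Rightarrow> ('l \<Rightarrow> 'a) \<Rightarrow> ('l \<Rightarrow> 'k) \<Rightarrow> 'a::comm_monoid_add" where
  "lin_comb sc z c \<equiv> \<Sum>\<alpha>\<in>{\<alpha>. c \<alpha> \<noteq> 0}. sc (c \<alpha>) (z \<alpha>)"

context module
begin

lemma lin_comb_eq_sum_superset:
  assumes "finite S" "{\<alpha>. c \<alpha> \<noteq> 0} \<subseteq> S"
  shows "lin_comb scale z c = (\<Sum>\<alpha>\<in>S. scale (c \<alpha>) (z \<alpha>))"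
  by (rule sum.mono_neutral_left) (use assms in auto)

lemma poly_act_eq_sum_superset:
  assumes "finite K" "Poly_Mapping.keys p \<subseteq> K"
  shows "poly_act scale T p b = (\<Sum>\<mu>\<in>K. scale (Poly_Mapping.lookup p \<mu>) (mono_act T \<mu> b))"
  unfolding poly_act_def
  by (rule sum.mono_neutral_left) (use assms in \<open>auto simp: in_keys_iff\<close>)

lemma poly_act_const_poly: "poly_act scale T (const_poly r) b = scale r b"
  by (cases "r = 0") (simp_all add: poly_act_def const_poly_def mono_act_zero)

lemma poly_act_linear_poly:
  assumes "finite S"
  shows "poly_act scale T (linear_poly S c) b = (\<Sum>\<alpha>\<in>S. scale (c \<alpha>) (T \<alpha> b))"
proof -
  have inj: "inj_on (\<lambda>\<alpha>. Poly_Mapping.single \<alpha> (1::nat)) S" by (simp add: inj_on_def)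
  have "poly_act scale T (linear_poly S c) b
      = (\<Sum>\<mu>\<in>(\<lambda>\<alpha>. Poly_Mapping.single \<alpha> 1) ` S.
           scale (Poly_Mapping.lookup (linear_poly S c) \<mu>) (mono_act T \<mu> b))"
    by (rule poly_act_eq_sum_superset) (use assms keys_linear_poly_subset in auto)
  also have "\<dots> = (\<Sum>\<alpha>\<in>S. scale (Poly_Mapping.lookup (linear_poly S c) (Poly_Mapping.single \<alpha> 1))
                              (mono_act T (Poly_Mapping.single \<alpha> 1) b))"
    by (rule sum.reindex[OF inj, unfolded comp_def])
  also have "\<dots> = (\<Sum>\<alpha>\<in>S. scale (c \<alpha>) (T \<alpha> b))"
    by (rule sum.cong) (simp_all only: lookup_linear_poly[OF assms] mono_act_single)
  finally show ?thesis .
qed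

end

locale poly_action_hom = M: module act + additive \<psi>
  for act :: "('l, 'k::field) mpoly \<Rightarrow> 'm::ab_group_add \<Rightarrow> 'm" and \<psi> :: "'m \<Rightarrow> 'b::ab_group_add" +
  fixes sc :: "'k \<Rightarrow> 'b \<Rightarrow> 'b" and T :: "'l \<Rightarrow> 'b \<Rightarrow> 'b"
  assumes hom_const_poly: "\<psi> (act (const_poly r) m) = sc r (\<psi> m)"
    and hom_var_poly: "\<psi> (act (var_poly \<alpha>) m) = T \<alpha> (\<psi> m)"
begin

lemma fold_eq_hom_monomial:
  "fold T xs (\<psi> m) = \<psi> (act (Poly_Mapping.single (monomial_of_list xs) 1) m)"
proof (induct xs arbitrary: m)
  case Nil then show ?case by (simp add: monomial_of_list_def)
next
  case (Cons \<alpha> xs)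
  have "fold T (\<alpha> # xs) (\<psi> m) = fold T xs (\<psi> (act (var_poly \<alpha>) m))"
    by (simp add: hom_var_poly)
  also have "\<dots> = \<psi> (act (Poly_Mapping.single (monomial_of_list xs) 1) (act (var_poly \<alpha>) m))"
    by (rule Cons)
  also have "\<dots> = \<psi> (act (Poly_Mapping.single (monomial_of_list (\<alpha> # xs)) 1) m)"
    by (simp add: var_poly_def mult_single monomial_of_list_Cons add.commute)
  finally show ?case .
qed

lemma mono_act_hom: "mono_act T \<mu> (\<psi> m) = \<psi> (act (Poly_Mapping.single \<mu> 1) m)"
proof (rule mono_act_eqI)
  fix xs assume "\<forall>\<alpha>. count_list xs \<alpha> = Poly_Mapping.lookup \<mu> \<alpha>"
  then have "monomial_of_list xs = \<mu>" by (intro poly_mapping_eqI) (simp add: lookup_monomial_of_list)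
  then show "fold T xs (\<psi> m) = \<psi> (act (Poly_Mapping.single \<mu> 1) m)"
    by (simp add: fold_eq_hom_monomial)
qed

lemma hom_poly_act: "\<psi> (act p m) = poly_act sc T p (\<psi> m)"
proof -
  have monomial: "\<psi> (act (Poly_Mapping.single \<mu> c) m) = sc c (mono_act T \<mu> (\<psi> m))" for \<mu> c
  proof -
    have "act (Poly_Mapping.single \<mu> c) m = act (const_poly c) (act (Poly_Mapping.single \<mu> 1) m)"
      by (simp add: const_poly_def mult_single)
    then show ?thesis by (simp only: hom_const_poly mono_act_hom)
  qed
  have "\<psi> (act p m)
      = (\<Sum>\<mu>\<in>Poly_Mapping.keys p. \<psi> (act (Poly_Mapping.single \<mu> (Poly_Mapping.lookup p \<mu>)) m))"
    by (subst (1) poly_mapping_sum_single_lookup[of p, symmetric]) (simp only: M.scale_sum_left sum)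
  also have "\<dots> = poly_act sc T p (\<psi> m)"
    unfolding poly_act_def by (simp add: monomial)
  finally show ?thesis .
qed

end

locale lie_alg =
  fixes sc :: "'k::field \<Rightarrow> 'a::ab_group_add \<Rightarrow> 'a" and br :: "'a \<Rightarrow> 'a \<Rightarrow> 'a"
  assumes lie_algebra: "lie_algebra sc br"

sublocale lie_alg \<subseteq> A: module sc
  using lie_algebra by (simp add: lie_algebra_def)

context lie_alg
begin

lemma bracket_add_left: "br (a + b) c = br a c + br b c"
  and bracket_add_right: "br a (b + c) = br a b + br a c"
  and bracket_scale_left: "br (sc r a) b = sc r (br a b)"
  and bracket_scale_right: "br a (sc r b) = sc r (br a b)"
  and bracket_self: "br a a = 0"
  using lie_algebra by (simp_all add: lie_algebra_def)

lemma additive_bracket_left: "additive (\<lambda>a. br a c)"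
  by standard (rule bracket_add_left)

lemma additive_bracket_right: "additive (br a)"
  by standard (rule bracket_add_right)

lemma bracket_zero_left [simp]: "br 0 b = 0"
  using additive.zero[OF additive_bracket_left] .

lemma bracket_zero_right [simp]: "br a 0 = 0"
  and bracket_diff_right: "br a (b - c) = br a b - br a c"
  and bracket_sum_right: "br a (sum f S) = (\<Sum>x\<in>S. br a (f x))"
  using additive.zero[OF additive_bracket_right] additive.diff[OF additive_bracket_right]
    additive.sum[OF additive_bracket_right] .

lemma bracket_antisym: "br a b = - br b a"
proof -
  have "0 = br (a + b) (a + b)" by (rule bracket_self[symmetric])
  also have "\<dots> = br a b + br b a"
    unfolding bracket_add_left bracket_add_right by (simp add: bracket_self)
  finally have "br a b + br b a = 0" by (rule sym)
  then show ?thesis by (simp add: eq_neg_iff_add_eq_0)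
qed

lemma bracket_span_left_mem:
  assumes "u \<in> A.span G" "\<And>g. g \<in> G \<Longrightarrow> br g y \<in> S" "A.subspace S"
  shows "br u y \<in> S"
  using assms(1)
proof (induct rule: A.span_induct_alt)
  case base then show ?case using assms(3) by (simp add: A.subspace_0)
next
  case (step c x u) then show ?case
    using assms(2,3) by (simp add: bracket_add_left bracket_scale_left A.subspace_add A.subspace_scale)
qed

lemma bracket_span_right_mem:
  assumes "u \<in> A.span G" "\<And>g. g \<in> G \<Longrightarrow> br y g \<in> S" "A.subspace S"
  shows "br y u \<in> S"
proof -
  have "br u y \<in> S"
    by (rule bracket_span_left_mem[OF assms(1) _ assms(3)])
      (metis assms(2,3) bracket_antisym A.subspace_neg)
  then show ?thesis by (metis bracket_antisym A.subspace_neg assms(3))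
qed

lemma lie_ideal_Fit: "lie_ideal sc br (Fit sc br)"
  unfolding lie_ideal_def Fit_def
  by (intro conjI A.subspace_Inter) (auto simp: lie_ideal_def)

lemma subspace_Fit: "A.subspace (Fit sc br)"
  using lie_ideal_Fit by (simp add: lie_ideal_def)

lemma nilpotent_ideal_subset_Fit: "nilpotent_ideal sc br I \<Longrightarrow> I \<subseteq> Fit sc br"
  unfolding Fit_def by blast

lemma abelian_ideal_nilpotent:
  assumes "lie_ideal sc br I" "\<And>x y. x \<in> I \<Longrightarrow> y \<in> I \<Longrightarrow> br x y = 0"
  shows "nilpotent_ideal sc br I"
proof -
  have "lower_central sc br I (Suc 0) \<subseteq> {0}"
    using assms(2) by (simp only: lower_central.simps, intro A.span_minimal) auto
  with assms(1) show ?thesis unfolding nilpotent_ideal_def by blast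
qed

lemma Fit_eq_UNIV_if_abelian:
  assumes "\<And>x y. br x y = 0"
  shows "Fit sc br = UNIV"
proof -
  have "lie_ideal sc br UNIV" by (simp add: lie_ideal_def)
  then show ?thesis using nilpotent_ideal_subset_Fit abelian_ideal_nilpotent assms by blast
qed

lemma bracket_mem_Fit_if_metabelian:
  assumes "metabelian br"
  shows "br x y \<in> Fit sc br"
proof -
  let ?G = "{br p q | p q. True}"
  have ideal: "lie_ideal sc br (A.span ?G)"
    unfolding lie_ideal_def
    by (auto intro: bracket_span_left_mem A.span_base)
  have "br u v = 0" if "u \<in> A.span ?G" "v \<in> A.span ?G" for u v
  proof -
    have "br u v \<in> {0}"
    proof (rule bracket_span_left_mem[OF that(1)])
      fix g assume "g \<in> ?G"
      then obtain p q where "g = br p q" by blast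
      moreover have "br (br p q) v \<in> {0}"
        by (rule bracket_span_right_mem[OF that(2)]) (use assms in \<open>auto simp: metabelian_def\<close>)
      ultimately show "br g v \<in> {0}" by simp
    qed simp
    then show ?thesis by simp
  qed
  then have "A.span ?G \<subseteq> Fit sc br"
    by (intro nilpotent_ideal_subset_Fit abelian_ideal_nilpotent[OF ideal])
  moreover have "br x y \<in> A.span ?G" by (rule A.span_base) blast
  ultimately show ?thesis by blast
qed

end

lemma quot_basis_coords_unique:
  fixes scale :: "'k::field \<Rightarrow> 'a::ab_group_add \<Rightarrow> 'a"
  assumes "module scale" "quot_basis scale F z" "module.subspace scale F"
    and fin1: "finite {\<alpha>. c1 \<alpha> \<noteq> 0}" and F1: "a - lin_comb scale z c1 \<in> F"
    and fin2: "finite {\<alpha>. c2 \<alpha> \<noteq> 0}" and F2: "a - lin_comb scale z c2 \<in> F"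
  shows "c1 = c2"
proof -
  let ?S = "{\<alpha>. c1 \<alpha> \<noteq> 0} \<union> {\<alpha>. c2 \<alpha> \<noteq> 0}"
  define d where "d \<alpha> = c2 \<alpha> - c1 \<alpha>" for \<alpha>
  have "finite ?S" using fin1 fin2 by simp
  moreover have supp_d: "{\<alpha>. d \<alpha> \<noteq> 0} \<subseteq> ?S" by (auto simp: d_def)
  ultimately have fin_d: "finite {\<alpha>. d \<alpha> \<noteq> 0}" by (rule finite_subset[rotated])
  have "(a - lin_comb scale z c1) - (a - lin_comb scale z c2) \<in> F"
    using F1 F2 assms(3) module.subspace_diff[OF assms(1)] by blast
  also have "(a - lin_comb scale z c1) - (a - lin_comb scale z c2)
      = (\<Sum>\<alpha>\<in>?S. scale (c2 \<alpha>) (z \<alpha>)) - (\<Sum>\<alpha>\<in>?S. scale (c1 \<alpha>) (z \<alpha>))"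
    using module.lin_comb_eq_sum_superset[OF assms(1) \<open>finite ?S\<close>] by auto
  also have "\<dots> = (\<Sum>\<alpha>\<in>?S. scale (d \<alpha>) (z \<alpha>))"
    by (simp add: d_def module.scale_left_diff_distrib[OF assms(1)] sum_subtractf)
  also have "\<dots> = lin_comb scale z d"
    using module.lin_comb_eq_sum_superset[OF assms(1) \<open>finite ?S\<close> supp_d] by simp
  finally have "\<forall>\<alpha>. d \<alpha> = 0" using assms(2) fin_d unfolding quot_basis_def by blast
  then show ?thesis by (auto simp: d_def)
qed

locale U_alg =
  fixes sc :: "'k::field \<Rightarrow> 'a::ab_group_add \<Rightarrow> 'a" and br :: "'a \<Rightarrow> 'a \<Rightarrow> 'a"
    and z :: "'l \<Rightarrow> 'a"
  assumes U_algebra: "U_algebra sc br z"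

sublocale U_alg \<subseteq> lie_alg
  using U_algebra by unfold_locales (simp add: U_algebra_def)

context U_alg
begin

lemma quot_basis_Fit: "quot_basis sc (Fit sc br) z"
  and bracket_Fit_Fit: "x \<in> Fit sc br \<Longrightarrow> y \<in> Fit sc br \<Longrightarrow> br x y = 0"
  and Fit_torsion_free: "b \<in> Fit sc br \<Longrightarrow> fit_act sc br z p b = 0 \<Longrightarrow> p = 0 \<or> b = 0"
  and bracket_mem_Fit: "br x y \<in> Fit sc br"
  using U_algebra bracket_mem_Fit_if_metabelian by (simp_all add: U_algebra_def)

lemma zcoords_eqI:
  assumes "finite {\<alpha>. c \<alpha> \<noteq> 0}" "a - lin_comb sc z c \<in> Fit sc br"
  shows "zcoords sc br z a = c"
  unfolding zcoords_def
  by (rule the_equality)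
    (use assms quot_basis_coords_unique[OF A.module_axioms quot_basis_Fit subspace_Fit] in blast)+

lemma finite_zcoords_support: "finite {\<alpha>. zcoords sc br z a \<alpha> \<noteq> 0}"
  and diff_lin_comb_zcoords_mem_Fit: "a - lin_comb sc z (zcoords sc br z a) \<in> Fit sc br"
proof -
  obtain c f where "finite {\<alpha>. c \<alpha> \<noteq> 0}" "f \<in> Fit sc br" "a = lin_comb sc z c + f"
    using quot_basis_Fit unfolding quot_basis_def by blast
  then show "finite {\<alpha>. zcoords sc br z a \<alpha> \<noteq> 0}" "a - lin_comb sc z (zcoords sc br z a) \<in> Fit sc br"
    using zcoords_eqI[of c a] by simp_all
qed

lemma zcoords_Fit: "b \<in> Fit sc br \<Longrightarrow> zcoords sc br z b = (\<lambda>_. 0)"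
  by (rule zcoords_eqI) auto

lemma zcoords_z: "zcoords sc br z (z \<alpha>) = (\<lambda>\<beta>. if \<beta> = \<alpha> then 1 else 0)"
proof (rule zcoords_eqI)
  have supp: "{\<beta>. (if \<beta> = \<alpha> then 1 else 0 :: 'k) \<noteq> 0} = {\<alpha>}" by auto
  show "finite {\<beta>. (if \<beta> = \<alpha> then 1 else 0 :: 'k) \<noteq> 0}" unfolding supp by simp
  show "z \<alpha> - lin_comb sc z (\<lambda>\<beta>. if \<beta> = \<alpha> then 1 else 0) \<in> Fit sc br"
    unfolding supp using subspace_Fit by (simp add: A.subspace_0)
qed

lemma bracket_lin_comb_zcoords:
  assumes "u \<in> Fit sc br"
  shows "br u (lin_comb sc z (zcoords sc br z a)) = br u a"
proof -
  let ?r = "a - lin_comb sc z (zcoords sc br z a)"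
  have "br u (lin_comb sc z (zcoords sc br z a)) = br u a - br u ?r"
    by (simp add: bracket_diff_right[symmetric])
  also have "br u ?r = 0" using bracket_Fit_Fit[OF assms diff_lin_comb_zcoords_mem_Fit] .
  finally show ?thesis by simp
qed

lemma fit_act_const_poly: "fit_act sc br z (const_poly r) b = sc r b"
  unfolding fit_act_def by (rule A.poly_act_const_poly)

lemma fit_act_linear_poly:
  assumes "finite S"
  shows "fit_act sc br z (linear_poly S c) b = br b (\<Sum>\<alpha>\<in>S. sc (c \<alpha>) (z \<alpha>))"
  unfolding fit_act_def A.poly_act_linear_poly[OF assms]
  by (simp add: bracket_sum_right bracket_scale_right)

lemma mem_Fit_if_centralizes_Fit:
  assumes "\<And>b. b \<in> Fit sc br \<Longrightarrow> br b u = 0"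
  shows "u \<in> Fit sc br"
proof (rule ccontr)
  assume u: "u \<notin> Fit sc br"
  obtain c f where fin: "finite {\<alpha>. c \<alpha> \<noteq> 0}" and f: "f \<in> Fit sc br"
    and u_eq: "u = lin_comb sc z c + f"
    using quot_basis_Fit unfolding quot_basis_def by blast
  obtain \<alpha> where "c \<alpha> \<noteq> 0"
    using u u_eq f by fastforce
  then have p: "linear_poly {\<alpha>. c \<alpha> \<noteq> 0} c \<noteq> 0"
    using fin by (intro linear_poly_nonzero) auto
  have "b = 0" if b: "b \<in> Fit sc br" for b
  proof -
    have "fit_act sc br z (linear_poly {\<alpha>. c \<alpha> \<noteq> 0} c) b = br b (u - f)"
      using u_eq by (simp add: fit_act_linear_poly[OF fin])
    also have "\<dots> = 0"
      using assms[OF b] bracket_Fit_Fit[OF b f] by (simp add: bracket_diff_right)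
    finally show "b = 0" using Fit_torsion_free[OF b] p by blast
  qed
  then have "br x y = 0" for x y using bracket_mem_Fit by blast
  then have "Fit sc br = UNIV" by (rule Fit_eq_UNIV_if_abelian)
  with u show False by blast
qed

end

locale U_alg_module = U_alg sc br z + M: module act
  for sc :: "'k::field \<Rightarrow> 'a::ab_group_add \<Rightarrow> 'a" and br and z :: "'l \<Rightarrow> 'a"
    and act :: "('l, 'k) mpoly \<Rightarrow> 'm::ab_group_add \<Rightarrow> 'm"
begin

lemma mod_br_eq_act_linear_poly:
  "mod_br sc br z act m a = act (linear_poly {\<alpha>. zcoords sc br z a \<alpha> \<noteq> 0} (zcoords sc br z a)) m"
  by (simp add: mod_br_def linear_poly_def)

lemma mod_br_zero_left [simp]: "mod_br sc br z act 0 a = 0"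
  by (simp add: mod_br_def)

lemma mod_br_Fit: "b \<in> Fit sc br \<Longrightarrow> mod_br sc br z act m b = 0"
  by (simp add: mod_br_def zcoords_Fit)

lemma mod_br_z: "mod_br sc br z act m (z \<alpha>) = act (var_poly \<alpha>) m"
proof -
  have "{\<beta>. (if \<beta> = \<alpha> then 1 else 0 :: 'k) \<noteq> 0} = {\<alpha>}" by auto
  then show ?thesis by (simp add: mod_br_def zcoords_z var_poly_def)
qed

lemma Hom_R_mod_br:
  assumes "\<psi> \<in> Hom_R sc br z act"
  shows "\<psi> (mod_br sc br z act m a) = br (\<psi> m) a"
proof -
  have "\<psi> m \<in> Fit sc br" "\<And>p. \<psi> (act p m) = fit_act sc br z p (\<psi> m)"
    using assms by (simp_all add: Hom_R_def)
  then show ?thesis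
    by (simp add: mod_br_eq_act_linear_poly finite_zcoords_support fit_act_linear_poly bracket_lin_comb_zcoords)
qed

lemma Hom_R_extension_mem_Hom_A:
  assumes \<psi>: "\<psi> \<in> Hom_R sc br z act"
  shows "(\<lambda>x. fst x + \<psi> (snd x)) \<in> Hom_A sc br z act"
proof -
  interpret \<psi>: additive \<psi> by standard (use \<psi> in \<open>simp add: Hom_R_def\<close>)
  have Fit: "\<psi> m \<in> Fit sc br" and act: "\<psi> (act p m) = fit_act sc br z p (\<psi> m)" for p m
    using \<psi> by (simp_all add: Hom_R_def)
  have bracket: "br (a + \<psi> m) (b + \<psi> n) = br a b + br (\<psi> m) b - br (\<psi> n) a" for a b m n
  proof -
    have "br (a + \<psi> m) (b + \<psi> n) = br a b + br a (\<psi> n) + br (\<psi> m) b + br (\<psi> m) (\<psi> n)"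
      by (simp add: bracket_add_left bracket_add_right algebra_simps)
    then show ?thesis using bracket_Fit_Fit[OF Fit Fit] bracket_antisym[of a "\<psi> n"] by simp
  qed
  show ?thesis
    unfolding Hom_A_def
  proof (intro CollectI conjI allI)
    fix x y :: "'a \<times> 'm"
    show "fst (x + y) + \<psi> (snd (x + y)) = fst x + \<psi> (snd x) + (fst y + \<psi> (snd y))"
      by (simp add: \<psi>.add algebra_simps)
    show "fst (ext_br sc br z act x y) + \<psi> (snd (ext_br sc br z act x y))
        = br (fst x + \<psi> (snd x)) (fst y + \<psi> (snd y))"
      by (simp add: ext_br_def \<psi>.diff Hom_R_mod_br[OF \<psi>] bracket add_diff_eq)
  next
    fix r and x :: "'a \<times> 'm"
    show "fst (ext_sc sc act r x) + \<psi> (snd (ext_sc sc act r x)) = sc r (fst x + \<psi> (snd x))"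
      by (simp add: ext_sc_def act fit_act_const_poly A.scale_right_distrib)
  next
    fix a :: 'a
    show "fst (a, 0::'m) + \<psi> (snd (a, 0::'m)) = a" by (simp add: \<psi>.zero)
  qed
qed

context
  fixes \<phi> assumes \<phi>: "\<phi> \<in> Hom_A sc br z act"
begin

interpretation \<phi>: additive \<phi>
  by standard (use \<phi> in \<open>unfold Hom_A_def, blast\<close>)

lemma Hom_A_bracket: "\<phi> (ext_br sc br z act x y) = br (\<phi> x) (\<phi> y)"
  and Hom_A_scale: "\<phi> (ext_sc sc act r x) = sc r (\<phi> x)"
  and Hom_A_on_A: "\<phi> (a, 0) = a"
  using \<phi> unfolding Hom_A_def by blast+

lemma Hom_A_decompose: "\<phi> (a, m) = a + \<phi> (0, m)"
  using \<phi>.add[of "(a, 0)" "(0, m)"] by (simp add: Hom_A_on_A)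

lemma additive_restriction: "additive (\<lambda>m. \<phi> (0, m))"
  by standard (simp add: \<phi>.add[symmetric])

lemma restriction_bracket_Fit: "b \<in> Fit sc br \<Longrightarrow> br (\<phi> (0, m)) b = 0"
  using Hom_A_bracket[of "(0, m)" "(b, 0)"] by (simp add: ext_br_def mod_br_Fit Hom_A_on_A)

lemma restriction_mem_Fit: "\<phi> (0, m) \<in> Fit sc br"
  by (rule mem_Fit_if_centralizes_Fit)
    (metis restriction_bracket_Fit bracket_antisym neg_equal_0_iff_equal)

lemma restriction_poly_action_hom:
  "poly_action_hom act (\<lambda>m. \<phi> (0, m)) sc (\<lambda>\<alpha> b. br b (z \<alpha>))"
proof (intro_locales)
  show "additive (\<lambda>m. \<phi> (0, m))" by (rule additive_restriction)
  show "poly_action_hom_axioms act (\<lambda>m. \<phi> (0, m)) sc (\<lambda>\<alpha> b. br b (z \<alpha>))"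
  proof
    show "\<phi> (0, act (const_poly r) m) = sc r (\<phi> (0, m))" for r m
      using Hom_A_scale[of r "(0, m)"] by (simp add: ext_sc_def)
    show "\<phi> (0, act (var_poly \<alpha>) m) = br (\<phi> (0, m)) (z \<alpha>)" for \<alpha> m
      using Hom_A_bracket[of "(0, m)" "(z \<alpha>, 0)"] by (simp add: ext_br_def mod_br_z Hom_A_on_A)
  qed
qed

lemma restriction_mem_Hom_R: "(\<lambda>m. \<phi> (0, m)) \<in> Hom_R sc br z act"
  using restriction_mem_Fit additive.add[OF additive_restriction]
    poly_action_hom.hom_poly_act[OF restriction_poly_action_hom]
  by (simp add: Hom_R_def fit_act_def)

end

lemma bij_betw_restriction_Hom_A_Hom_R:
  "bij_betw (\<lambda>\<phi> m. \<phi> (0, m)) (Hom_A sc br z act) (Hom_R sc br z act)"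
proof (rule bij_betw_byWitness[where f' = "\<lambda>\<psi> x. fst x + \<psi> (snd x)"])
  show "\<forall>\<phi>\<in>Hom_A sc br z act. (\<lambda>x. fst x + \<phi> (0, snd x)) = \<phi>"
    by (auto simp: Hom_A_decompose[symmetric])
  show "(\<lambda>\<phi> m. \<phi> (0, m)) ` Hom_A sc br z act \<subseteq> Hom_R sc br z act"
    using restriction_mem_Hom_R by blast
  show "(\<lambda>\<psi> x. fst x + \<psi> (snd x)) ` Hom_R sc br z act \<subseteq> Hom_A sc br z act"
    using Hom_R_extension_mem_Hom_A by blast
qed simp

end

theorem lemma4p3p7:
  fixes sc :: "'k::field \<Rightarrow> 'a::ab_group_add \<Rightarrow> 'a"
    and br :: "'a \<Rightarrow> 'a \<Rightarrow> 'a"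
    and z :: "'l \<Rightarrow> 'a"
    and act :: "('l, 'k) mpoly \<Rightarrow> 'm::ab_group_add \<Rightarrow> 'm"
  assumes "U_algebra sc br z"
    and "module act"
    and "torsion_free act"
  shows "(\<forall>\<phi>\<in>Hom_A sc br z act.
            (\<forall>m. \<phi> (0, m) \<in> Fit sc br) \<and> (\<lambda>m. \<phi> (0, m)) \<in> Hom_R sc br z act)
       \<and> bij_betw (\<lambda>\<phi> m. \<phi> (0, m)) (Hom_A sc br z act) (Hom_R sc br z act)"
proof -
  interpret U_alg_module sc br z act
    using assms(1,2) by (intro U_alg_module.intro U_alg.intro)
  show ?thesis
    using restriction_mem_Fit restriction_mem_Hom_R bij_betw_restriction_Hom_A_Hom_R by blast
qed

end
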